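(* Let $\mathcal{A},\mathcal{D}$ be categories and let $(\mathcal{E},\mathcal{M})$ be any orthogonal factorization system on $[\mathcal{A},\mathcal{D}]$. If all natural transformations in $\mathcal{M}$ are cartesian, then $(\mathcal{E},\mathcal{M})$ restricts to an orthogonal factorization system on $\mathrm{CartNt}[\mathcal{A},\mathcal{D}]$, the category of all functors $\mathcal{A}\to\mathcal{D}$ and cartesian natural transformations.
   Context: A natural transformation is cartesian if all its naturality squares are pullbacks. An orthogonal factorization system $(\mathcal{E},\mathcal{M})$: both classes contain all isomorphisms and are closed under composition; each commuting square $g\circ e = m\circ f$ with $e\in\mathcal{E}$, $m\in\mathcal{M}$ has a unique diagonal $d$ with $d\circ e=f$, $m\circ d = g$; every morphism factors as $m\circ e$ with $e\in\mathcal{E}$, $m\in\mathcal{M}$. Restriction means intersecting both classes with the cartesian natural transformations. *)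

theory Defs
  imports Main "HOL-Library.FuncSet"
begin

record ('o, 'a) cat =
  Obj  :: "'o set"
  Arr  :: "'a set"
  Dom  :: "'a \<Rightarrow> 'o"
  Cod  :: "'a \<Rightarrow> 'o"
  Id   :: "'o \<Rightarrow> 'a"
  Comp :: "'a \<Rightarrow> 'a \<Rightarrow> 'a"   (* Comp C g f = g o f, for Cod f = Dom g *)

definition hom :: "('o, 'a) cat \<Rightarrow> 'o \<Rightarrow> 'o \<Rightarrow> 'a set" where
  "hom C x y = {f \<in> Arr C. Dom C f = x \<and> Cod C f = y}"

definition category :: "('o, 'a) cat \<Rightarrow> bool" where
  "category C \<longleftrightarrow>
     (\<forall>f \<in> Arr C. Dom C f \<in> Obj C \<and> Cod C f \<in> Obj C) \<and>
     (\<forall>x \<in> Obj C. Id C x \<in> hom C x x) \<and>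
     (\<forall>f \<in> Arr C. \<forall>g \<in> Arr C. Cod C f = Dom C g \<longrightarrow>
         Comp C g f \<in> hom C (Dom C f) (Cod C g)) \<and>
     (\<forall>f \<in> Arr C. Comp C f (Id C (Dom C f)) = f \<and> Comp C (Id C (Cod C f)) f = f) \<and>
     (\<forall>f \<in> Arr C. \<forall>g \<in> Arr C. \<forall>h \<in> Arr C.
         Cod C f = Dom C g \<longrightarrow> Cod C g = Dom C h \<longrightarrow>
         Comp C h (Comp C g f) = Comp C (Comp C h g) f)"

definition iso :: "('o, 'a) cat \<Rightarrow> 'a \<Rightarrow> bool" where
  "iso C f \<longleftrightarrow> f \<in> Arr C \<and>
     (\<exists>g \<in> hom C (Cod C f) (Dom C f).
        Comp C g f = Id C (Dom C f) \<and> Comp C f g = Id C (Cod C f))"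

definition pullback :: "('o, 'a) cat \<Rightarrow> 'a \<Rightarrow> 'a \<Rightarrow> 'a \<Rightarrow> 'a \<Rightarrow> bool" where
  "pullback C p q f g \<longleftrightarrow>
     p \<in> Arr C \<and> q \<in> Arr C \<and> f \<in> Arr C \<and> g \<in> Arr C \<and>
     Dom C p = Dom C q \<and> Cod C p = Dom C f \<and> Cod C q = Dom C g \<and> Cod C f = Cod C g \<and>
     Comp C f p = Comp C g q \<and>
     (\<forall>x \<in> Arr C. \<forall>y \<in> Arr C.
        Dom C x = Dom C y \<and> Cod C x = Dom C f \<and> Cod C y = Dom C g \<and>
        Comp C f x = Comp C g y \<longrightarrow>
        (\<exists>!u. u \<in> hom C (Dom C x) (Dom C p) \<and> Comp C p u = x \<and> Comp C q u = y))"

definition ofs :: "('o, 'a) cat \<Rightarrow> 'a set \<Rightarrow> 'a set \<Rightarrow> bool" where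
  "ofs C E M \<longleftrightarrow>
     E \<subseteq> Arr C \<and> M \<subseteq> Arr C \<and>
     {f. iso C f} \<subseteq> E \<and> {f. iso C f} \<subseteq> M \<and>
     (\<forall>f \<in> E. \<forall>g \<in> E. Cod C f = Dom C g \<longrightarrow> Comp C g f \<in> E) \<and>
     (\<forall>f \<in> M. \<forall>g \<in> M. Cod C f = Dom C g \<longrightarrow> Comp C g f \<in> M) \<and>
     (\<forall>e \<in> E. \<forall>m \<in> M. \<forall>f \<in> Arr C. \<forall>g \<in> Arr C.
        Dom C f = Dom C e \<and> Cod C f = Dom C m \<and> Dom C g = Cod C e \<and> Cod C g = Cod C m \<and>
        Comp C g e = Comp C m f \<longrightarrow>
        (\<exists>!d. d \<in> hom C (Cod C e) (Dom C m) \<and> Comp C d e = f \<and> Comp C m d = g)) \<and>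
     (\<forall>h \<in> Arr C. \<exists>e \<in> E. \<exists>m \<in> M.
        Cod C e = Dom C m \<and> h = Comp C m e)"

record ('oa, 'aa, 'od, 'ad) ftor =
  fobj :: "'oa \<Rightarrow> 'od"
  farr :: "'aa \<Rightarrow> 'ad"

text \<open>Functors are taken extensional (undefined off the carriers), so that
  equality of functors is the right notion of equality of objects of the functor category.\<close>
definition is_functor :: "('oa, 'aa) cat \<Rightarrow> ('od, 'ad) cat \<Rightarrow> ('oa, 'aa, 'od, 'ad) ftor \<Rightarrow> bool" where
  "is_functor A D F \<longleftrightarrow>
     fobj F \<in> extensional (Obj A) \<and> farr F \<in> extensional (Arr A) \<and>
     (\<forall>x \<in> Obj A. fobj F x \<in> Obj D) \<and>
     (\<forall>f \<in> Arr A. farr F f \<in> hom D (fobj F (Dom A f)) (fobj F (Cod A f))) \<and>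
     (\<forall>x \<in> Obj A. farr F (Id A x) = Id D (fobj F x)) \<and>
     (\<forall>f \<in> Arr A. \<forall>g \<in> Arr A. Cod A f = Dom A g \<longrightarrow>
        farr F (Comp A g f) = Comp D (farr F g) (farr F f))"

type_synonym ('oa, 'aa, 'od, 'ad) nt =
  "('oa, 'aa, 'od, 'ad) ftor \<times> ('oa, 'aa, 'od, 'ad) ftor \<times> ('oa \<Rightarrow> 'ad)"

definition natural_transformation ::
  "('oa, 'aa) cat \<Rightarrow> ('od, 'ad) cat \<Rightarrow> ('oa, 'aa, 'od, 'ad) nt \<Rightarrow> bool" where
  "natural_transformation A D \<tau> \<longleftrightarrow>
     (case \<tau> of (F, G, \<eta>) \<Rightarrow>
       is_functor A D F \<and> is_functor A D G \<and> \<eta> \<in> extensional (Obj A) \<and>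
       (\<forall>x \<in> Obj A. \<eta> x \<in> hom D (fobj F x) (fobj G x)) \<and>
       (\<forall>u \<in> Arr A. Comp D (\<eta> (Cod A u)) (farr F u) = Comp D (farr G u) (\<eta> (Dom A u))))"

definition cartesian ::
  "('oa, 'aa) cat \<Rightarrow> ('od, 'ad) cat \<Rightarrow> ('oa, 'aa, 'od, 'ad) nt \<Rightarrow> bool" where
  "cartesian A D \<tau> \<longleftrightarrow> natural_transformation A D \<tau> \<and>
     (case \<tau> of (F, G, \<eta>) \<Rightarrow>
       (\<forall>u \<in> Arr A. pullback D (farr F u) (\<eta> (Dom A u)) (\<eta> (Cod A u)) (farr G u)))"

definition functor_cat ::
  "('oa, 'aa) cat \<Rightarrow> ('od, 'ad) cat \<Rightarrow>
   (('oa, 'aa, 'od, 'ad) ftor, ('oa, 'aa, 'od, 'ad) nt) cat" where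
  "functor_cat A D =
     \<lparr> Obj = {F. is_functor A D F},
       Arr = {\<tau>. natural_transformation A D \<tau>},
       Dom = (\<lambda>(F, G, \<eta>). F),
       Cod = (\<lambda>(F, G, \<eta>). G),
       Id = (\<lambda>F. (F, F, \<lambda>x \<in> Obj A. Id D (fobj F x))),
       Comp = (\<lambda>(G', H, \<theta>) (F, G, \<eta>). (F, H, \<lambda>x \<in> Obj A. Comp D (\<theta> x) (\<eta> x))) \<rparr>"

definition cart_functor_cat ::
  "('oa, 'aa) cat \<Rightarrow> ('od, 'ad) cat \<Rightarrow>
   (('oa, 'aa, 'od, 'ad) ftor, ('oa, 'aa, 'od, 'ad) nt) cat" where
  "cart_functor_cat A D = (functor_cat A D) \<lparr> Arr := {\<tau>. cartesian A D \<tau>} \<rparr>"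

end

theory Submission
  imports Defs
begin

text \<open>
  The naturality squares of a vertical composite \<open>m \<circ> d\<close> are the pastings of those of \<open>d\<close> and
  \<open>m\<close>. By the pasting law for pullbacks, cartesian transformations are therefore closed under
  composition, and by the cancellation law, \<open>d\<close> is cartesian whenever \<open>m\<close> and \<open>m \<circ> d\<close> are.
  Applied with \<open>m \<in> \<M>\<close>, cancellation shows that the \<open>\<E>\<close>-part of the factorization of a
  cartesian transformation, and the diagonal filler of a square of cartesian transformations,
  are cartesian; so the factorization system restricts to this wide subcategory.
\<close>

definition commuting_square :: "('o, 'a) cat \<Rightarrow> 'a \<Rightarrow> 'a \<Rightarrow> 'a \<Rightarrow> 'a \<Rightarrow> bool" where
  "commuting_square C p q f g \<longleftrightarrow>
     p \<in> Arr C \<and> q \<in> Arr C \<and> f \<in> Arr C \<and> g \<in> Arr C \<and>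
     Dom C p = Dom C q \<and> Cod C p = Dom C f \<and> Cod C q = Dom C g \<and> Cod C f = Cod C g \<and>
     Comp C f p = Comp C g q"

lemma pullback_iff_commuting_square:
  "pullback C p q f g \<longleftrightarrow> commuting_square C p q f g \<and>
     (\<forall>x y. commuting_square C x y f g \<longrightarrow>
        (\<exists>!u. u \<in> hom C (Dom C x) (Dom C p) \<and> Comp C p u = x \<and> Comp C q u = y))"
  unfolding pullback_def commuting_square_def by blast

lemma pullbackI:
  assumes "commuting_square C p q f g"
    and "\<And>x y. commuting_square C x y f g \<Longrightarrow>
           \<exists>u \<in> hom C (Dom C x) (Dom C p). Comp C p u = x \<and> Comp C q u = y"
    and "\<And>u w X. u \<in> hom C X (Dom C p) \<Longrightarrow> w \<in> hom C X (Dom C p) \<Longrightarrow>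
           Comp C p u = Comp C p w \<Longrightarrow> Comp C q u = Comp C q w \<Longrightarrow> u = w"
  shows "pullback C p q f g"
  unfolding pullback_iff_commuting_square using assms by metis

lemma pullback_commuting_square: "pullback C p q f g \<Longrightarrow> commuting_square C p q f g"
  by (simp add: pullback_iff_commuting_square)

lemma pullback_lift:
  assumes "pullback C p q f g" and "commuting_square C x y f g"
  obtains u where "u \<in> hom C (Dom C x) (Dom C p)" "Comp C p u = x" "Comp C q u = y"
  using assms unfolding pullback_iff_commuting_square by blast

context
  fixes C :: "('o, 'a) cat"
  assumes C: "category C"
begin

lemma Dom_Cod_in_Obj:
  assumes "f \<in> Arr C"
  shows "Dom C f \<in> Obj C" "Cod C f \<in> Obj C"
  using C assms unfolding category_def by auto

lemma comp_arr [simp]: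
  assumes "f \<in> Arr C" "g \<in> Arr C" "Cod C f = Dom C g"
  shows "Comp C g f \<in> Arr C" "Dom C (Comp C g f) = Dom C f" "Cod C (Comp C g f) = Cod C g"
  using C assms unfolding category_def hom_def by auto

lemma comp_assoc:
  assumes "f \<in> Arr C" "g \<in> Arr C" "h \<in> Arr C" "Cod C f = Dom C g" "Cod C g = Dom C h"
  shows "Comp C h (Comp C g f) = Comp C (Comp C h g) f"
  using C assms unfolding category_def by blast

lemma commuting_square_paste:
  assumes "commuting_square C p q f g" and "commuting_square C g q' f' g'"
  shows "commuting_square C p (Comp C q' q) (Comp C f' f) g'"
proof -
  note sq = assms[unfolded commuting_square_def]
  have "Comp C (Comp C f' f) p = Comp C f' (Comp C g q)"
    using sq comp_assoc[of p f f'] by simp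
  also have "\<dots> = Comp C (Comp C g' q') q"
    using sq comp_assoc[of q g f'] by simp
  also have "\<dots> = Comp C g' (Comp C q' q)"
    using sq comp_assoc[of q q' g'] by simp
  finally show ?thesis
    using sq unfolding commuting_square_def by simp
qed

lemma commuting_square_precomp:
  assumes "commuting_square C p q f g" and "u \<in> hom C X (Dom C p)"
  shows "commuting_square C (Comp C p u) (Comp C q u) f g"
proof -
  note sq = assms(1)[unfolded commuting_square_def] and u = assms(2)[unfolded hom_def]
  have "Comp C f (Comp C p u) = Comp C g (Comp C q u)"
    using sq u comp_assoc[of u p f] comp_assoc[of u q g] by simp
  then show ?thesis
    using sq u unfolding commuting_square_def by simp
qed

lemma pullback_jointly_monic:
  assumes pb: "pullback C p q f g"
    and u: "u \<in> hom C X (Dom C p)" and w: "w \<in> hom C X (Dom C p)"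
    and "Comp C p u = Comp C p w" and "Comp C q u = Comp C q w"
  shows "u = w"
proof -
  have "commuting_square C (Comp C p u) (Comp C q u) f g"
    using commuting_square_precomp[OF pullback_commuting_square[OF pb] u] .
  moreover have "Dom C (Comp C p u) = X"
    using pullback_commuting_square[OF pb] u unfolding commuting_square_def hom_def by simp
  ultimately have "\<exists>!v. v \<in> hom C X (Dom C p) \<and> Comp C p v = Comp C p u \<and> Comp C q v = Comp C q u"
    using pb unfolding pullback_iff_commuting_square by metis
  then show ?thesis
    using u w assms(4,5) by metis
qed

lemma pullback_paste:
  assumes left: "pullback C p q f g" and right: "pullback C g q' f' g'"
  shows "pullback C p (Comp C q' q) (Comp C f' f) g'"
proof -
  note sq\<^sub>l = pullback_commuting_square[OF left] and sq\<^sub>r = pullback_commuting_square[OF right]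
  note sq = sq\<^sub>l[unfolded commuting_square_def] sq\<^sub>r[unfolded commuting_square_def]
  show ?thesis
  proof (rule pullbackI)
    show "commuting_square C p (Comp C q' q) (Comp C f' f) g'"
      using commuting_square_paste[OF sq\<^sub>l sq\<^sub>r] .
  next
    fix x y assume cone: "commuting_square C x y (Comp C f' f) g'"
    note xy = cone[unfolded commuting_square_def]
    have "Comp C f' (Comp C f x) = Comp C g' y"
      using sq xy comp_assoc[of x f f'] by simp
    then have "commuting_square C (Comp C f x) y f' g'"
      using sq xy unfolding commuting_square_def by simp
    then obtain v where v: "v \<in> hom C (Dom C x) (Dom C g)" "Comp C g v = Comp C f x" "Comp C q' v = y"
      using sq xy by (auto elim: pullback_lift[OF right])
    then have "commuting_square C x v f g"
      using sq xy unfolding commuting_square_def hom_def by simp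
    then obtain u where u: "u \<in> hom C (Dom C x) (Dom C p)" "Comp C p u = x" "Comp C q u = v"
      by (rule pullback_lift[OF left])
    have "Comp C (Comp C q' q) u = y"
      using sq u v comp_assoc[of u q q'] unfolding hom_def by simp
    with u show "\<exists>u \<in> hom C (Dom C x) (Dom C p). Comp C p u = x \<and> Comp C (Comp C q' q) u = y"
      by blast
  next
    fix u w X
    assume u: "u \<in> hom C X (Dom C p)" and w: "w \<in> hom C X (Dom C p)"
      and pu: "Comp C p u = Comp C p w" and qu: "Comp C (Comp C q' q) u = Comp C (Comp C q' q) w"
    have qu_hom: "Comp C q u \<in> hom C X (Dom C g)" and qw_hom: "Comp C q w \<in> hom C X (Dom C g)"
      using sq u w unfolding hom_def by auto
    have "Comp C g (Comp C q u) = Comp C g (Comp C q w)"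
      using commuting_square_precomp[OF sq\<^sub>l u] commuting_square_precomp[OF sq\<^sub>l w] pu
      unfolding commuting_square_def by simp
    moreover have "Comp C q' (Comp C q u) = Comp C q' (Comp C q w)"
      using sq u w qu comp_assoc[of u q q'] comp_assoc[of w q q'] unfolding hom_def by simp
    ultimately have "Comp C q u = Comp C q w"
      by (rule pullback_jointly_monic[OF right qu_hom qw_hom])
    then show "u = w"
      by (rule pullback_jointly_monic[OF left u w pu])
  qed
qed

lemma pullback_cancel:
  assumes right: "pullback C g q' f' g'"
    and outer: "pullback C p (Comp C q' q) (Comp C f' f) g'"
    and sq\<^sub>l: "commuting_square C p q f g"
  shows "pullback C p q f g"
proof -
  note sq = sq\<^sub>l[unfolded commuting_square_def]
    pullback_commuting_square[OF right, unfolded commuting_square_def]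
  show ?thesis
  proof (rule pullbackI[OF sq\<^sub>l])
    fix x y assume cone: "commuting_square C x y f g"
    have "commuting_square C x (Comp C q' y) (Comp C f' f) g'"
      using commuting_square_paste[OF cone pullback_commuting_square[OF right]] .
    then obtain u where u: "u \<in> hom C (Dom C x) (Dom C p)" "Comp C p u = x"
        "Comp C (Comp C q' q) u = Comp C q' y"
      by (rule pullback_lift[OF outer])
    note xy = cone[unfolded commuting_square_def]
    have qu_hom: "Comp C q u \<in> hom C (Dom C x) (Dom C g)" and y_hom: "y \<in> hom C (Dom C x) (Dom C g)"
      using sq xy u unfolding hom_def by auto
    have "Comp C g (Comp C q u) = Comp C g y"
      using commuting_square_precomp[OF sq\<^sub>l u(1)] u(2) xy unfolding commuting_square_def by simp
    moreover have "Comp C q' (Comp C q u) = Comp C q' y"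
      using sq u comp_assoc[of u q q'] unfolding hom_def by simp
    ultimately have "Comp C q u = y"
      by (rule pullback_jointly_monic[OF right qu_hom y_hom])
    with u show "\<exists>u \<in> hom C (Dom C x) (Dom C p). Comp C p u = x \<and> Comp C q u = y"
      by blast
  next
    fix u w X
    assume u: "u \<in> hom C X (Dom C p)" and w: "w \<in> hom C X (Dom C p)"
      and pu: "Comp C p u = Comp C p w" and qu: "Comp C q u = Comp C q w"
    have "Comp C (Comp C q' q) u = Comp C (Comp C q' q) w"
      using sq u w qu comp_assoc[of u q q'] comp_assoc[of w q q'] unfolding hom_def by simp
    then show "u = w"
      by (rule pullback_jointly_monic[OF outer u w pu])
  qed
qed

end

lemma functor_cat_simps [simp]:
  "Arr (functor_cat A D) = {\<tau>. natural_transformation A D \<tau>}"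
  "Dom (functor_cat A D) (F, G, \<eta>) = F"
  "Cod (functor_cat A D) (F, G, \<eta>) = G"
  "Comp (functor_cat A D) (G', H, \<theta>) (F, G, \<eta>) = (F, H, \<lambda>x \<in> Obj A. Comp D (\<theta> x) (\<eta> x))"
  by (simp_all add: functor_cat_def)

lemma naturality_square:
  assumes "category A" and "natural_transformation A D (F, G, \<eta>)" and "u \<in> Arr A"
  shows "commuting_square D (farr F u) (\<eta> (Dom A u)) (\<eta> (Cod A u)) (farr G u)"
  using Dom_Cod_in_Obj[OF assms(1,3)] assms(2,3)
  unfolding natural_transformation_def is_functor_def commuting_square_def hom_def by auto

lemma natural_transformation_vcomp:
  assumes A: "category A" and D: "category D"
    and \<eta>: "natural_transformation A D (F, G, \<eta>)" and \<theta>: "natural_transformation A D (G, H, \<theta>)"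
  shows "natural_transformation A D (F, H, \<lambda>x \<in> Obj A. Comp D (\<theta> x) (\<eta> x))"
proof -
  have "Comp D (\<theta> x) (\<eta> x) \<in> hom D (fobj F x) (fobj H x)" if "x \<in> Obj A" for x
    using \<eta> \<theta> that D unfolding natural_transformation_def hom_def by auto
  moreover have "Comp D (Comp D (\<theta> (Cod A u)) (\<eta> (Cod A u))) (farr F u) =
      Comp D (farr H u) (Comp D (\<theta> (Dom A u)) (\<eta> (Dom A u)))" if "u \<in> Arr A" for u
    using commuting_square_paste[OF D naturality_square[OF A \<eta> that] naturality_square[OF A \<theta> that]]
    unfolding commuting_square_def by simp
  ultimately show ?thesis
    using \<eta> \<theta> Dom_Cod_in_Obj[OF A] unfolding natural_transformation_def by auto
qed

lemma cartesian_comp: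
  assumes A: "category A" and D: "category D"
    and \<sigma>: "cartesian A D \<sigma>" and \<tau>: "cartesian A D \<tau>"
    and "Cod (functor_cat A D) \<sigma> = Dom (functor_cat A D) \<tau>"
  shows "cartesian A D (Comp (functor_cat A D) \<tau> \<sigma>)"
proof -
  obtain F G \<eta> H \<theta> where \<sigma>_def: "\<sigma> = (F, G, \<eta>)" and \<tau>_def: "\<tau> = (G, H, \<theta>)"
    using assms(5) by (cases \<sigma>, cases \<tau>) auto
  have "pullback D (farr F u) (Comp D (\<theta> (Dom A u)) (\<eta> (Dom A u)))
      (Comp D (\<theta> (Cod A u)) (\<eta> (Cod A u))) (farr H u)" if "u \<in> Arr A" for u
    using pullback_paste[OF D] \<sigma> \<tau> that unfolding \<sigma>_def \<tau>_def cartesian_def by auto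
  then show ?thesis
    using natural_transformation_vcomp[OF A D] \<sigma> \<tau> Dom_Cod_in_Obj[OF A] unfolding \<sigma>_def \<tau>_def cartesian_def by auto
qed

lemma cartesian_cancel:
  assumes A: "category A" and D: "category D"
    and \<sigma>: "natural_transformation A D \<sigma>" and \<tau>: "cartesian A D \<tau>"
    and "Cod (functor_cat A D) \<sigma> = Dom (functor_cat A D) \<tau>"
    and \<tau>\<sigma>: "cartesian A D (Comp (functor_cat A D) \<tau> \<sigma>)"
  shows "cartesian A D \<sigma>"
proof -
  obtain F G \<eta> H \<theta> where \<sigma>_def: "\<sigma> = (F, G, \<eta>)" and \<tau>_def: "\<tau> = (G, H, \<theta>)"
    using assms(5) by (cases \<sigma>, cases \<tau>) auto
  have "pullback D (farr F u) (\<eta> (Dom A u)) (\<eta> (Cod A u)) (farr G u)" if u: "u \<in> Arr A" for u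
  proof (rule pullback_cancel[OF D])
    show "pullback D (farr G u) (\<theta> (Dom A u)) (\<theta> (Cod A u)) (farr H u)"
      using \<tau> u unfolding \<tau>_def cartesian_def by auto
    show "pullback D (farr F u) (Comp D (\<theta> (Dom A u)) (\<eta> (Dom A u)))
        (Comp D (\<theta> (Cod A u)) (\<eta> (Cod A u))) (farr H u)"
      using \<tau>\<sigma> u Dom_Cod_in_Obj[OF A u] unfolding \<sigma>_def \<tau>_def cartesian_def by auto
    show "commuting_square D (farr F u) (\<eta> (Dom A u)) (\<eta> (Cod A u)) (farr G u)"
      using naturality_square[OF A _ u] \<sigma> unfolding \<sigma>_def .
  qed
  then show ?thesis
    using \<sigma> unfolding \<sigma>_def cartesian_def by auto
qed

lemma ofs_restrict_wide:
  assumes ofs: "ofs C E M" and "M \<subseteq> S" and "S \<subseteq> Arr C"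
    and comp_closed: "\<And>f g. f \<in> S \<Longrightarrow> g \<in> S \<Longrightarrow> Cod C f = Dom C g \<Longrightarrow> Comp C g f \<in> S"
    and cancel: "\<And>d m. d \<in> Arr C \<Longrightarrow> m \<in> M \<Longrightarrow> Cod C d = Dom C m \<Longrightarrow> Comp C m d \<in> S \<Longrightarrow> d \<in> S"
  shows "ofs (C\<lparr>Arr := S\<rparr>) (E \<inter> S) (M \<inter> S)"
proof -
  have iso: "iso C f \<and> f \<in> S" if "iso (C\<lparr>Arr := S\<rparr>) f" for f
    using that assms(3) unfolding iso_def hom_def by auto
  have lift: "\<exists>!d. d \<in> hom (C\<lparr>Arr := S\<rparr>) (Cod C e) (Dom C m) \<and> Comp C d e = f \<and> Comp C m d = g"
    if "e \<in> E" "m \<in> M" "f \<in> S" "g \<in> S"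
      "Dom C f = Dom C e" "Cod C f = Dom C m" "Dom C g = Cod C e" "Cod C g = Cod C m"
      "Comp C g e = Comp C m f" for e m f g
  proof -
    have "\<exists>!d. d \<in> hom C (Cod C e) (Dom C m) \<and> Comp C d e = f \<and> Comp C m d = g"
      using ofs that assms(3) unfolding ofs_def by blast
    then obtain d where d: "d \<in> hom C (Cod C e) (Dom C m)" "Comp C d e = f" "Comp C m d = g"
      by blast
    have "d \<in> S"
      using cancel[of d m] d that unfolding hom_def by auto
    then have "d \<in> hom (C\<lparr>Arr := S\<rparr>) (Cod C e) (Dom C m)"
      using d unfolding hom_def by simp
    moreover have "hom (C\<lparr>Arr := S\<rparr>) x y \<subseteq> hom C x y" for x y
      using assms(3) unfolding hom_def by auto
    ultimately show ?thesis
      using \<open>\<exists>!d. _\<close> d by blast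
  qed
  have factor: "\<exists>e \<in> E \<inter> S. \<exists>m \<in> M \<inter> S. Cod C e = Dom C m \<and> h = Comp C m e" if h: "h \<in> S" for h
  proof -
    obtain e m where em: "e \<in> E" "m \<in> M" "Cod C e = Dom C m" "h = Comp C m e"
      using ofs h assms(3) unfolding ofs_def by blast
    moreover have "e \<in> S"
      using cancel[of e m] em ofs h unfolding ofs_def by blast
    ultimately show ?thesis
      using assms(2) by blast
  qed
  have closed: "\<forall>f \<in> E \<inter> S. \<forall>g \<in> E \<inter> S. Cod C f = Dom C g \<longrightarrow> Comp C g f \<in> E \<inter> S"
      "\<forall>f \<in> M \<inter> S. \<forall>g \<in> M \<inter> S. Cod C f = Dom C g \<longrightarrow> Comp C g f \<in> M \<inter> S"
    using ofs comp_closed unfolding ofs_def by blast+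
  have restricted: "Arr (C\<lparr>Arr := S\<rparr>) = S" "Dom (C\<lparr>Arr := S\<rparr>) = Dom C"
      "Cod (C\<lparr>Arr := S\<rparr>) = Cod C" "Comp (C\<lparr>Arr := S\<rparr>) = Comp C"
    by simp_all
  show ?thesis
    unfolding ofs_def restricted
  proof (intro conjI)
    show "{f. iso (C\<lparr>Arr := S\<rparr>) f} \<subseteq> E \<inter> S" "{f. iso (C\<lparr>Arr := S\<rparr>) f} \<subseteq> M \<inter> S"
      using iso ofs unfolding ofs_def by blast+
  qed (use closed lift factor in blast)+
qed

theorem lemma4p8:
  fixes A :: "('oa, 'aa) cat" and D :: "('od, 'ad) cat"
    and E M :: "('oa, 'aa, 'od, 'ad) nt set"
  assumes "category A" and "category D"
    and "ofs (functor_cat A D) E M"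
    and "\<forall>\<tau> \<in> M. cartesian A D \<tau>"
  shows "ofs (cart_functor_cat A D) (E \<inter> {\<tau>. cartesian A D \<tau>}) (M \<inter> {\<tau>. cartesian A D \<tau>})"
  unfolding cart_functor_cat_def
proof (rule ofs_restrict_wide[OF assms(3)])
  show "M \<subseteq> {\<tau>. cartesian A D \<tau>}"
    using assms(4) by blast
  show "{\<tau>. cartesian A D \<tau>} \<subseteq> Arr (functor_cat A D)"
    by (auto simp: cartesian_def)
  show "Comp (functor_cat A D) \<tau> \<sigma> \<in> {\<tau>. cartesian A D \<tau>}"
    if "\<sigma> \<in> {\<tau>. cartesian A D \<tau>}" "\<tau> \<in> {\<tau>. cartesian A D \<tau>}"
      "Cod (functor_cat A D) \<sigma> = Dom (functor_cat A D) \<tau>" for \<sigma> \<tau>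
    using cartesian_comp[OF assms(1,2)] that by blast
  show "\<sigma> \<in> {\<tau>. cartesian A D \<tau>}"
    if "\<sigma> \<in> Arr (functor_cat A D)" "\<tau> \<in> M" "Cod (functor_cat A D) \<sigma> = Dom (functor_cat A D) \<tau>"
      "Comp (functor_cat A D) \<tau> \<sigma> \<in> {\<tau>. cartesian A D \<tau>}" for \<sigma> \<tau>
    using cartesian_cancel[OF assms(1,2) _ _ that(3)] that assms(4) by simp
qed

end
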